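(* Run MUDAN on a reported profile $\theta'$ and suppose the final winner set $W$ is nonempty; let $w^*$ be the last buyer added to $W$. Then for every buyer $i\neq w^*$: $i$ belongs to the explored set $A$ at the moment $w^*$ is selected if and only if there is a directed path from $s$ to $i$ in $G_{\theta'}$ that does not pass through $w^*$ (i.e. $w^*$ is not critical for $i$).
   Context: Single-demand model. A seller $s$ has $m\ge 1$ identical items. Buyers $B=\{1,\dots,n\}$; buyer $i$ has a true valuation $v_i\in\mathbb{R}_{\ge0}$ and true neighbour set $r_i\subseteq B$; the seller has a fixed neighbour set $r_s\subseteq B$. Buyer $i$ reports $(v'_i,r'_i)$ with $v'_i\ge 0$, $r'_i\subseteq r_i$. The profile graph $G_{\theta'}$ of the global report $\theta'$ is the directed graph on $\{s\}\cup B$ with an edge $(x,y)$ iff $y\in r'_x$ (for $x=s$ use $r_s$). A buyer $w$ is critical for a buyer $i$ if every directed path from $s$ to $i$ in $G_{\theta'}$ passes through $w$. Priority rule: each buyer $i$ is given a priority $\sigma_i$ that is a function of its reported neighbour set $r'_i$ only (e.g. $\sigma_i=|r'_i|$), independent of all reported valuations and non-decreasing with respect to inclusion of $r'_i$; ties are broken by a fixed total order on buyers. MUDAN, run on a reported profile $\theta'$. It maintains an explored set $A\subseteq B$, a winner set $W\subseteq A$, remaining supply $m'=m-|W|$, and tentative payments. For current $A,W$ the potential-winner set $P(A,W)$ is: $P=A$ if $|A\setminus W|\le m'$; otherwise $P=W\cup\{$the $m'$ buyers of $A\setminus W$ with highest reported valuations$\}$ (ties broken by a fixed total order). Buyers in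 $A\setminus P$ are called exhausted. Initialise $A=r_s$, $W=\varnothing$, and repeat: (1) Closure: while some buyer $x\in W\cup(A\setminus P(A,W))$ (with $P$ recomputed from the current $A,W$) has $r'_x\not\subseteq A$, set $A\leftarrow A\cup r'_x$. (2) Let $P=P(A,W)$; if $P\setminus W=\varnothing$, stop. (3) Let $w$ be the buyer of $P\setminus W$ with highest priority; set its tentative payment $\hat p_w$ to the $(m'+1)$-th highest reported valuation in $A\setminus W$ (current $m'$, before adding $w$), or $0$ if $|A\setminus W|\le m'$; add $w$ to $W$. Output: every $w\in W$ gets an item and pays $\hat p_w$; other buyers get nothing and pay $0$. *)

theory Defs
  imports Complex_Main
begin

(* Buyers are elements of a linearly ordered type 'b; the linear order is the
   fixed total order used for tie-breaking (smaller buyer preferred).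
   The seller s is represented by None, buyer b by Some b in the profile graph.
   r :: 'b => 'b set gives the REPORTED neighbour sets r'_i, v the REPORTED valuations,
   rs the seller's neighbour set, sigma i X the priority of buyer i reporting X. *)

definition better :: "('b::linorder \<Rightarrow> real) \<Rightarrow> 'b \<Rightarrow> 'b \<Rightarrow> bool" where
  "better v y x \<longleftrightarrow> v y > v x \<or> (v y = v x \<and> y < x)"

definition top_k :: "('b::linorder \<Rightarrow> real) \<Rightarrow> nat \<Rightarrow> 'b set \<Rightarrow> 'b set" where
  "top_k v k S = {x \<in> S. card {y \<in> S. better v y x} < k}"

text \<open>Potential-winner set P(A,W); remaining supply is m - |W|.\<close>
definition potential :: "nat \<Rightarrow> ('b::linorder \<Rightarrow> real) \<Rightarrow> 'b set \<Rightarrow> 'b set \<Rightarrow> 'b set" where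
  "potential m v A W =
     (if card (A - W) \<le> m - card W then A
      else W \<union> top_k v (m - card W) (A - W))"

definition closed_state :: "nat \<Rightarrow> ('b::linorder \<Rightarrow> real) \<Rightarrow> ('b \<Rightarrow> 'b set) \<Rightarrow> 'b set \<Rightarrow> 'b set \<Rightarrow> bool" where
  "closed_state m v r A W \<longleftrightarrow> (\<forall>x \<in> W \<union> (A - potential m v A W). r x \<subseteq> A)"

definition selects :: "nat \<Rightarrow> ('b::linorder \<Rightarrow> real) \<Rightarrow> ('b \<Rightarrow> 'b set) \<Rightarrow> ('b \<Rightarrow> 'b set \<Rightarrow> real)
    \<Rightarrow> 'b set \<Rightarrow> 'b set \<Rightarrow> 'b \<Rightarrow> bool" where
  "selects m v r \<sigma> A W w \<longleftrightarrow>
     w \<in> potential m v A W - W \<and>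
     (\<forall>y \<in> potential m v A W - W. y \<noteq> w \<longrightarrow>
        \<sigma> y (r y) < \<sigma> w (r w) \<or> (\<sigma> y (r y) = \<sigma> w (r w) \<and> w < y))"

definition closure_step :: "nat \<Rightarrow> ('b::linorder \<Rightarrow> real) \<Rightarrow> ('b \<Rightarrow> 'b set)
    \<Rightarrow> 'b set \<times> 'b set \<Rightarrow> 'b set \<times> 'b set \<Rightarrow> bool" where
  "closure_step m v r st st' \<longleftrightarrow>
     (\<exists>x. x \<in> snd st \<union> (fst st - potential m v (fst st) (snd st)) \<and>
          \<not> r x \<subseteq> fst st \<and> st' = (fst st \<union> r x, snd st))"

definition select_step :: "nat \<Rightarrow> ('b::linorder \<Rightarrow> real) \<Rightarrow> ('b \<Rightarrow> 'b set) \<Rightarrow> ('b \<Rightarrow> 'b set \<Rightarrow> real)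
    \<Rightarrow> 'b set \<times> 'b set \<Rightarrow> 'b set \<times> 'b set \<Rightarrow> 'b \<Rightarrow> bool" where
  "select_step m v r \<sigma> st st' w \<longleftrightarrow>
     closed_state m v r (fst st) (snd st) \<and> selects m v r \<sigma> (fst st) (snd st) w \<and>
     st' = (fst st, insert w (snd st))"

definition mudan_step :: "nat \<Rightarrow> ('b::linorder \<Rightarrow> real) \<Rightarrow> ('b \<Rightarrow> 'b set) \<Rightarrow> ('b \<Rightarrow> 'b set \<Rightarrow> real)
    \<Rightarrow> 'b set \<times> 'b set \<Rightarrow> 'b set \<times> 'b set \<Rightarrow> bool" where
  "mudan_step m v r \<sigma> st st' \<longleftrightarrow> closure_step m v r st st' \<or> (\<exists>w. select_step m v r \<sigma> st st' w)"

definition terminal_state :: "nat \<Rightarrow> ('b::linorder \<Rightarrow> real) \<Rightarrow> ('b \<Rightarrow> 'b set) \<Rightarrow> 'b set \<times> 'b set \<Rightarrow> bool" where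
  "terminal_state m v r st \<longleftrightarrow>
     closed_state m v r (fst st) (snd st) \<and> potential m v (fst st) (snd st) - snd st = {}"

definition mudan_run :: "nat \<Rightarrow> ('b::linorder \<Rightarrow> real) \<Rightarrow> ('b \<Rightarrow> 'b set) \<Rightarrow> ('b \<Rightarrow> 'b set \<Rightarrow> real)
    \<Rightarrow> 'b set \<Rightarrow> ('b set \<times> 'b set) list \<Rightarrow> bool" where
  "mudan_run m v r \<sigma> rs ss \<longleftrightarrow>
     ss \<noteq> [] \<and> hd ss = (rs, {}) \<and>
     (\<forall>j. Suc j < length ss \<longrightarrow> mudan_step m v r \<sigma> (ss ! j) (ss ! Suc j)) \<and>
     terminal_state m v r (last ss)"

definition profile_edges :: "'b set \<Rightarrow> 'b set \<Rightarrow> ('b \<Rightarrow> 'b set) \<Rightarrow> ('b option \<times> 'b option) set" where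
  "profile_edges B rs r =
     {(None, Some y) | y. y \<in> rs} \<union> {(Some x, Some y) | x y. x \<in> B \<and> y \<in> r x}"

definition reach_avoiding :: "('b option \<times> 'b option) set \<Rightarrow> 'b \<Rightarrow> 'b \<Rightarrow> bool" where
  "reach_avoiding E w i \<longleftrightarrow>
     (None, Some i) \<in> {(a, b). (a, b) \<in> E \<and> a \<noteq> Some w \<and> b \<noteq> Some w}\<^sup>*"

end

theory Submission
  imports Defs
begin

text \<open>
  Before the last selection every buyer that triggered exploration was a winner or exhausted,
  and neither can be \<open>w\<^sup>*\<close>: winners stay winners and exhausted buyers stay exhausted, while
  \<open>w\<^sup>*\<close> is still a potential winner when it is selected.  Hence everything explored by then is
  reachable avoiding \<open>w\<^sup>*\<close>.  Conversely, when \<open>w\<^sup>*\<close> is selected it is the only potential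
  non-winner: with one unit of supply left this holds because at most one non-winner can
  be potential, and with more supply any other explored non-winner would still be a potential
  winner after the selection, so the auction could not stop.  Thus every explored buyer other
  than \<open>w\<^sup>*\<close> is a winner or exhausted, closure makes the explored set closed under the
  neighbour sets of these buyers, and no path avoiding \<open>w\<^sup>*\<close> leaves it.
\<close>

lemma better_total: "x \<noteq> y \<Longrightarrow> better v x y \<or> better v y x"
  by (auto simp: better_def neq_iff)

text \<open>\<open>card {z \<in> S. better v z x}\<close> is the rank of \<open>x\<close> in \<open>S\<close>; \<open>top_k v k S\<close> is the set of
  buyers of rank below \<open>k\<close>.\<close>

lemma card_better_less:
  assumes "finite S" "x \<in> S" "better v x y"
  shows "card {z \<in> S. better v z x} < card {z \<in> S. better v z y}"
proof (rule psubset_card_mono)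
  show "{z \<in> S. better v z x} \<subset> {z \<in> S. better v z y}"
    using assms(2,3) by (auto simp: better_def)
qed (use assms(1) in simp)

lemma top_k_subset: "top_k v k S \<subseteq> S"
  by (auto simp: top_k_def)

lemma top_k_better:
  assumes "finite S" "w \<in> top_k v k S" "x \<in> S - top_k v k S"
  shows "better v w x"
proof (rule ccontr)
  assume "\<not> better v w x"
  moreover have "w \<noteq> x" using assms(2,3) by auto
  ultimately have "better v x w" using better_total by blast
  then have "card {z \<in> S. better v z x} < k"
    using card_better_less[OF assms(1)] assms(2,3) by (fastforce simp: top_k_def)
  then show False using assms(3) by (simp add: top_k_def)
qed

lemma top_k_nonempty:
  assumes "finite S" "S \<noteq> {}" "0 < k"
  shows "top_k v k S \<noteq> {}"
proof -
  from assms(2) obtain x0 where "x0 \<in> S" by blast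
  then obtain x where x: "x \<in> S"
    and least: "\<forall>y. y \<in> S \<longrightarrow> card {z \<in> S. better v z x} \<le> card {z \<in> S. better v z y}"
    using ex_has_least_nat[of "\<lambda>x. x \<in> S" x0 "\<lambda>x. card {z \<in> S. better v z x}"] by blast
  have "\<not> better v y x" if "y \<in> S" for y
    using card_better_less[OF assms(1) that, of v x] least that by (meson leD)
  then have "card {z \<in> S. better v z x} = 0" by (simp add: card_eq_0_iff)
  then show ?thesis using x assms(3) by (auto simp: top_k_def)
qed

lemma card_top_k_le:
  assumes "finite S"
  shows "card (top_k v k S) \<le> k"
proof -
  have "inj_on (\<lambda>x. card {z \<in> S. better v z x}) (top_k v k S)"
  proof (rule inj_onI)
    fix x y assume "x \<in> top_k v k S" "y \<in> top_k v k S"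
      and eq: "card {z \<in> S. better v z x} = card {z \<in> S. better v z y}"
    then have "x \<in> S" "y \<in> S" using top_k_subset by blast+
    show "x = y"
    proof (rule ccontr)
      assume "x \<noteq> y"
      then show False
        using better_total card_better_less[OF assms \<open>x \<in> S\<close>, of v y]
          card_better_less[OF assms \<open>y \<in> S\<close>, of v x] eq by fastforce
    qed
  qed
  then have "card (top_k v k S) \<le> card {..<k}"
    by (rule card_inj_on_le) (auto simp: top_k_def)
  then show ?thesis by simp
qed

lemma potential_minus_winners_subset: "potential m v A W - W \<subseteq> A - W"
  using top_k_subset[of v _ "A - W"] by (auto simp: potential_def)

lemma card_potential_minus_winners_le:
  assumes "finite A"
  shows "card (potential m v A W - W) \<le> m - card W"
proof (cases "card (A - W) \<le> m - card W")
  case True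
  then show ?thesis
    by (metis Diff_mono card_mono assms finite_Diff le_trans order_refl potential_def)
next
  case False
  then have "potential m v A W - W = top_k v (m - card W) (A - W)"
    using top_k_subset[of v _ "A - W"] by (auto simp: potential_def)
  then show ?thesis using card_top_k_le[of "A - W"] assms by simp
qed

lemma potential_minus_winners_nonempty:
  assumes "finite A" "A - W \<noteq> {}" "card W < m"
  shows "potential m v A W - W \<noteq> {}"
proof (cases "card (A - W) \<le> m - card W")
  case True
  then show ?thesis using assms(2) by (simp add: potential_def)
next
  case False
  then have "top_k v (m - card W) (A - W) \<subseteq> potential m v A W - W"
    using top_k_subset[of v _ "A - W"] by (auto simp: potential_def)
  moreover have "top_k v (m - card W) (A - W) \<noteq> {}"
    by (rule top_k_nonempty) (use assms in auto)
  ultimately show ?thesis by blast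
qed

lemma card_winners_less_if_potential:
  assumes "finite A" "w \<in> potential m v A W - W"
  shows "card W < m"
proof -
  have "finite (potential m v A W - W)"
    by (rule finite_subset[OF potential_minus_winners_subset]) (use assms(1) in simp)
  then have "0 < card (potential m v A W - W)"
    using assms(2) by (auto simp: card_gt_0_iff)
  then show ?thesis using card_potential_minus_winners_le[OF assms(1), of m v W] by linarith
qed

text \<open>Buyers of \<open>A - P(A, W)\<close> are the exhausted ones.\<close>

lemma exhausted_iff:
  "x \<in> A - potential m v A W \<longleftrightarrow>
     x \<in> A - W \<and> \<not> card (A - W) \<le> m - card W \<and>
     m - card W \<le> card {y \<in> A - W. better v y x}"
  by (auto simp: potential_def top_k_def)

lemma exhausted_explore:
  assumes "finite A'" "A \<subseteq> A'" "x \<in> A - potential m v A W"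
  shows "x \<in> A' - potential m v A' W"
proof -
  have "card (A - W) \<le> card (A' - W)"
    "card {y \<in> A - W. better v y x} \<le> card {y \<in> A' - W. better v y x}"
    using assms(1,2) by (auto intro: card_mono)
  then show ?thesis using assms(2,3) unfolding exhausted_iff by auto
qed

lemma exhausted_select:
  assumes "finite A" "W \<subseteq> A" "w \<in> potential m v A W - W" "x \<in> A - potential m v A W"
  shows "x \<in> A - potential m v A (insert w W)"
proof -
  define k where "k = m - card W"
  have x: "x \<in> A - W" "\<not> card (A - W) \<le> k" "k \<le> card {y \<in> A - W. better v y x}"
    using assms(4) unfolding exhausted_iff k_def by auto
  have w_top: "w \<in> top_k v k (A - W)" and x_top: "x \<notin> top_k v k (A - W)"
    using assms(3,4) x(2) by (auto simp: potential_def k_def)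
  have "better v w x" using top_k_better assms(1) w_top x_top x(1) by blast
  have "w \<in> A - W" using w_top top_k_subset by blast
  have "0 < k" using w_top by (auto simp: top_k_def)
  have "x \<noteq> w" using assms(3,4) by blast
  \<comment> \<open>\<open>w\<close> outranks \<open>x\<close>, so selecting \<open>w\<close> lowers both the supply and the rank of \<open>x\<close> by one.\<close>
  have "finite W" using assms(2,1) by (rule finite_subset)
  then have remaining: "m - card (insert w W) = k - 1"
    using \<open>w \<in> A - W\<close> unfolding k_def by simp
  have "A - insert w W = (A - W) - {w}" by blast
  then have explored: "card (A - insert w W) = card (A - W) - 1"
    using \<open>w \<in> A - W\<close> assms(1) by (simp add: card_Diff_singleton)
  have "{y \<in> A - insert w W. better v y x} = {y \<in> A - W. better v y x} - {w}" by blast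
  then have rank: "card {y \<in> A - insert w W. better v y x} = card {y \<in> A - W. better v y x} - 1"
    using \<open>w \<in> A - W\<close> \<open>better v w x\<close> assms(1) by (simp add: card_Diff_singleton)
  show ?thesis
    unfolding exhausted_iff remaining explored rank
    using x \<open>x \<noteq> w\<close> \<open>0 < k\<close> by (simp; intro conjI; linarith)
qed

lemma potential_minus_winners_eq_singleton:
  assumes "finite A'" "W \<subseteq> A" "A \<subseteq> A'" "w \<in> potential m v A W - W"
    and stop: "potential m v A' (insert w W) - insert w W = {}"
  shows "potential m v A W - W = {w}"
proof (rule ccontr)
  assume "potential m v A W - W \<noteq> {w}"
  then obtain x where x: "x \<in> potential m v A W - W" "x \<noteq> w" using assms(4) by blast
  have "finite A" using assms(3,1) by (rule finite_subset)
  have "finite W" using assms(2) \<open>finite A\<close> by (rule finite_subset)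
  consider "m - card W = 1" | "1 < m - card W"
    using card_winners_less_if_potential[OF \<open>finite A\<close> assms(4)] by linarith
  then show False
  proof cases
    case 1
    have "finite (potential m v A W - W)"
      by (rule finite_subset[OF potential_minus_winners_subset]) (use \<open>finite A\<close> in simp)
    then have "card {x, w} \<le> card (potential m v A W - W)"
      using x assms(4) by (intro card_mono) auto
    then show False
      using card_potential_minus_winners_le[OF \<open>finite A\<close>, of m v W] x(2) 1 by simp
  next
    case 2
    have "A' - insert w W \<noteq> {}" using x potential_minus_winners_subset assms(3) by blast
    moreover have "card (insert w W) < m" using 2 \<open>finite W\<close> assms(4) by simp
    ultimately have "potential m v A' (insert w W) - insert w W \<noteq> {}"
      by (rule potential_minus_winners_nonempty[OF assms(1)])
    then show False using stop by simp
  qed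
qed

lemma reach_avoiding_seller:
  "i \<in> rs \<Longrightarrow> i \<noteq> w \<Longrightarrow> reach_avoiding (profile_edges B rs r) w i"
  by (auto simp: reach_avoiding_def profile_edges_def)

lemma reach_avoiding_step:
  assumes "reach_avoiding (profile_edges B rs r) w x" "x \<in> B" "x \<noteq> w" "i \<in> r x" "i \<noteq> w"
  shows "reach_avoiding (profile_edges B rs r) w i"
  using assms unfolding reach_avoiding_def
  by (elim rtrancl_into_rtrancl) (auto simp: profile_edges_def)

lemma reach_avoiding_closed_set:
  assumes "rs \<subseteq> S" "\<And>x. x \<in> S \<Longrightarrow> x \<noteq> w \<Longrightarrow> r x \<subseteq> S"
    and "reach_avoiding (profile_edges B rs r) w i"
  shows "i \<in> S"
proof -
  have "b = None \<or> (\<exists>y. b = Some y \<and> y \<in> S)"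
    if "(None, b) \<in> {(a, b). (a, b) \<in> profile_edges B rs r \<and> a \<noteq> Some w \<and> b \<noteq> Some w}\<^sup>*"
    for b
    using that
  proof (induction rule: rtrancl_induct)
    case (step y z)
    then show ?case using assms(1,2) by (auto simp: profile_edges_def)
  qed simp
  then show ?thesis using assms(3) by (auto simp: reach_avoiding_def)
qed

locale mudan_execution =
  fixes B :: "'b::linorder set" and rs :: "'b set" and r :: "'b \<Rightarrow> 'b set"
    and v :: "'b \<Rightarrow> real" and m :: nat and \<sigma> :: "'b \<Rightarrow> 'b set \<Rightarrow> real"
    and ss :: "('b set \<times> 'b set) list"
  assumes finite_buyers: "finite B" and seller_neighbours: "rs \<subseteq> B"
    and neighbours: "\<forall>i\<in>B. r i \<subseteq> B"
    and run: "mudan_run m v r \<sigma> rs ss"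
begin

abbreviation explored :: "nat \<Rightarrow> 'b set" where "explored k \<equiv> fst (ss ! k)"
abbreviation winners :: "nat \<Rightarrow> 'b set" where "winners k \<equiv> snd (ss ! k)"
abbreviation potentials :: "nat \<Rightarrow> 'b set" where
  "potentials k \<equiv> potential m v (explored k) (winners k)"

lemma initial_state: "explored 0 = rs" "winners 0 = {}"
  using run by (auto simp: mudan_run_def hd_conv_nth)

lemma step_cases [consumes 1, case_names closure select]:
  assumes "Suc k < length ss"
  obtains x where "x \<in> winners k \<union> (explored k - potentials k)"
      "explored (Suc k) = explored k \<union> r x" "winners (Suc k) = winners k"
  | w where "select_step m v r \<sigma> (ss ! k) (ss ! Suc k) w"
      "explored (Suc k) = explored k" "winners (Suc k) = insert w (winners k)"
proof -
  have "mudan_step m v r \<sigma> (ss ! k) (ss ! Suc k)"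
    using run assms by (simp add: mudan_run_def)
  then consider "closure_step m v r (ss ! k) (ss ! Suc k)"
    | w where "select_step m v r \<sigma> (ss ! k) (ss ! Suc k) w"
    unfolding mudan_step_def by blast
  then show thesis
  proof cases
    case 1
    then obtain x where "x \<in> winners k \<union> (explored k - potentials k)"
      "ss ! Suc k = (explored k \<union> r x, winners k)"
      unfolding closure_step_def by blast
    then show ?thesis using that(1)[of x] by simp
  next
    case (2 w)
    then show ?thesis using that(2)[of w] by (simp add: select_step_def)
  qed
qed

lemma selected_in_potentials:
  "select_step m v r \<sigma> (ss ! k) (ss ! Suc k) w \<Longrightarrow> w \<in> potentials k - winners k"
  by (simp add: select_step_def selects_def)

lemma winners_subset_explored_subset_buyers:
  "k < length ss \<Longrightarrow> winners k \<subseteq> explored k \<and> explored k \<subseteq> B"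
proof (induction k)
  case 0
  then show ?case using initial_state seller_neighbours by simp
next
  case (Suc k)
  then have IH: "winners k \<subseteq> explored k" "explored k \<subseteq> B" by auto
  from Suc.prems show ?case
  proof (cases rule: step_cases)
    case (closure x)
    then have "x \<in> B" using IH by blast
    then have "r x \<subseteq> B" using neighbours by blast
    then show ?thesis using IH unfolding closure(2,3) by blast
  next
    case (select w)
    have "w \<in> explored k"
      using selected_in_potentials[OF select(1)]
        potential_minus_winners_subset[of m v "explored k" "winners k"] by blast
    then show ?thesis using IH unfolding select(2,3) by blast
  qed
qed

lemma finite_explored: "k < length ss \<Longrightarrow> finite (explored k)"
  using winners_subset_explored_subset_buyers finite_buyers by (meson finite_subset)

lemma explored_winners_mono:
  assumes "k \<le> l" "l < length ss"
  shows "explored k \<subseteq> explored l \<and> winners k \<subseteq> winners l"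
  using assms(1)
proof (induction rule: dec_induct)
  case (step n)
  from step.hyps(2) assms(2) have "Suc n < length ss" by simp
  then show ?case by (cases rule: step_cases) (use step.IH in auto)
qed simp

lemma exhausted_persists:
  assumes "k \<le> l" "l < length ss" "x \<in> explored k - potentials k"
  shows "x \<in> explored l - potentials l"
  using assms(1)
proof (induction rule: dec_induct)
  case base
  then show ?case using assms(3) .
next
  case (step n)
  from step.hyps(2) assms(2) have n: "Suc n < length ss" by simp
  then show ?case
  proof (cases rule: step_cases)
    case (closure y)
    have "finite (explored (Suc n))" using finite_explored n .
    then show ?thesis using exhausted_explore[OF _ _ step.IH] closure(2,3) by simp
  next
    case (select w)
    have "finite (explored n)" "winners n \<subseteq> explored n"
      using finite_explored winners_subset_explored_subset_buyers n by auto
    then show ?thesis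
      using exhausted_select[OF _ _ selected_in_potentials[OF select(1)] step.IH] select(2,3)
      by simp
  qed
qed

context
  fixes j :: nat and w :: 'b
  assumes j_step: "Suc j < length ss"
    and sel: "select_step m v r \<sigma> (ss ! j) (ss ! Suc j) w"
    and last_sel: "\<forall>l w'. j < l \<and> Suc l < length ss \<longrightarrow>
                     \<not> select_step m v r \<sigma> (ss ! l) (ss ! Suc l) w'"
begin

lemma winners_after_last_selection:
  assumes "Suc j \<le> l" "l < length ss"
  shows "winners l = insert w (winners j)"
  using assms(1)
proof (induction rule: dec_induct)
  case base
  then show ?case using sel by (simp add: select_step_def)
next
  case (step n)
  from step.hyps(2) assms(2) have "Suc n < length ss" by simp
  then show ?case
  proof (cases rule: step_cases)
    case (select w')
    then show ?thesis using last_sel step.hyps(1) \<open>Suc n < length ss\<close> by auto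
  qed (use step.IH in simp)
qed

lemma selected_unique_potential: "potentials j - winners j = {w}"
proof -
  define F where "F = length ss - 1"
  have F: "Suc j \<le> F" "F < length ss" using j_step by (auto simp: F_def)
  have "terminal_state m v r (ss ! F)"
    using run last_conv_nth[of ss] by (auto simp: mudan_run_def F_def)
  then have stop: "potential m v (explored F) (insert w (winners j)) - insert w (winners j) = {}"
    using winners_after_last_selection[OF F] by (simp add: terminal_state_def)
  have "explored j \<subseteq> explored F" using explored_winners_mono F by simp
  moreover have "winners j \<subseteq> explored j"
    using winners_subset_explored_subset_buyers j_step by simp
  ultimately show ?thesis
    using potential_minus_winners_eq_singleton[OF finite_explored[OF F(2)] _ _
        selected_in_potentials[OF sel] stop] by blast
qed

lemma explored_closed:
  assumes "x \<in> explored j" "x \<noteq> w"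
  shows "r x \<subseteq> explored j"
proof -
  have "x \<in> winners j \<union> (explored j - potentials j)"
    using selected_unique_potential assms by blast
  then show ?thesis using sel by (auto simp: select_step_def closed_state_def)
qed

lemma explored_reach_avoiding:
  assumes "k \<le> j" "i \<in> explored k" "i \<noteq> w"
  shows "reach_avoiding (profile_edges B rs r) w i"
  using assms
proof (induction k arbitrary: i)
  case 0
  then show ?case using initial_state reach_avoiding_seller by simp
next
  case (Suc k)
  from Suc.prems(1) j_step have k: "Suc k < length ss" by simp
  then show ?case
  proof (cases rule: step_cases)
    case (closure x)
    \<comment> \<open>\<open>w\<close> is not yet a winner, and an exhausted \<open>w\<close> would stay exhausted up to step \<open>j\<close>.\<close>
    have "x \<noteq> w"
    proof
      assume "x = w"
      have "winners k \<subseteq> winners j" using explored_winners_mono Suc.prems(1) j_step by simp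
      then have "w \<in> explored k - potentials k"
        using closure(1) selected_in_potentials[OF sel] \<open>x = w\<close> by blast
      then have "w \<in> explored j - potentials j"
        using exhausted_persists[of k j] Suc.prems(1) j_step by simp
      then show False using selected_in_potentials[OF sel] by blast
    qed
    have "x \<in> explored k" "explored k \<subseteq> B"
      using closure(1) winners_subset_explored_subset_buyers[of k] k by auto
    show ?thesis
    proof (cases "i \<in> explored k")
      case True
      then show ?thesis using Suc by simp
    next
      case False
      then have "i \<in> r x" using Suc.prems(2) closure(2) by simp
      have "reach_avoiding (profile_edges B rs r) w x"
        using Suc.IH Suc.prems(1) \<open>x \<in> explored k\<close> \<open>x \<noteq> w\<close> by simp
      moreover have "x \<in> B" using \<open>x \<in> explored k\<close> \<open>explored k \<subseteq> B\<close> by blast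
      ultimately show ?thesis
        using \<open>x \<noteq> w\<close> \<open>i \<in> r x\<close> Suc.prems(3) by (rule reach_avoiding_step)
    qed
  next
    case (select w')
    then show ?thesis using Suc by simp
  qed
qed

lemma explored_iff_reach_avoiding:
  assumes "i \<noteq> w"
  shows "i \<in> explored j \<longleftrightarrow> reach_avoiding (profile_edges B rs r) w i"
proof
  show "i \<in> explored j \<Longrightarrow> reach_avoiding (profile_edges B rs r) w i"
    using explored_reach_avoiding[of j i] assms by simp
  have "rs \<subseteq> explored j" using explored_winners_mono[of 0 j] initial_state j_step by simp
  then show "reach_avoiding (profile_edges B rs r) w i \<Longrightarrow> i \<in> explored j"
    using explored_closed by (rule reach_avoiding_closed_set)
qed

end

end

theorem lemma3:
  fixes B :: "'b::linorder set" and rs :: "'b set" and r :: "'b \<Rightarrow> 'b set"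
    and v :: "'b \<Rightarrow> real" and m :: nat and \<sigma> :: "'b \<Rightarrow> 'b set \<Rightarrow> real"
    and ss :: "('b set \<times> 'b set) list" and j :: nat and wstar :: 'b
  assumes "finite B" and "rs \<subseteq> B" and "\<forall>i\<in>B. r i \<subseteq> B"
    and "m \<ge> 1" and "\<forall>i\<in>B. v i \<ge> 0"
    and "\<forall>i X Y. X \<subseteq> Y \<longrightarrow> \<sigma> i X \<le> \<sigma> i Y"
    and run: "mudan_run m v r \<sigma> rs ss"
    and "Suc j < length ss"
    and sel: "select_step m v r \<sigma> (ss ! j) (ss ! Suc j) wstar"
    and last_sel: "\<forall>l w. j < l \<and> Suc l < length ss \<longrightarrow> \<not> select_step m v r \<sigma> (ss ! l) (ss ! Suc l) w"
  shows "\<forall>i\<in>B. i \<noteq> wstar \<longrightarrow>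
           (i \<in> fst (ss ! j) \<longleftrightarrow> reach_avoiding (profile_edges B rs r) wstar i)"
proof -
  interpret mudan_execution B rs r v m \<sigma> ss
    using assms(1-3) run by unfold_locales
  show ?thesis
    using explored_iff_reach_avoiding[OF \<open>Suc j < length ss\<close> sel last_sel] by blast
qed

end
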